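(* Consider any one of the four basic beta-gamma polymer models (IG, G, B or IB), written in the Mellin form of the context with functions $f^1,f^2$ and parameters $(a_1,a_2,a_3)$. Then \[ \psi_1^{f^1}(a_1)\,\psi_2^{f^2}(a_2)+\psi_1^{f^2}(a_2)\,\psi_2^{f^1}(a_1)>0. \]
   Context: Mellin framework: for $f:(0,\infty)\to[0,\infty)$, $M_f(a)=\int_0^\infty x^{a-1}f(x)\,dx$; $D(M_f)$ is the interior of $\{a:0<M_f(a)<\infty\}$; for $a\in D(M_f)$, $X\sim m_f(a)$ means $X$ has density $M_f(a)^{-1}x^{a-1}f(x)$ on $(0,\infty)$; $\psi^f_n(a)=\frac{\partial^{n+1}}{\partial a^{n+1}}\log M_f(a)$. The four basic beta-gamma models ($\beta>0,\mu>0$) are polymer models on $\mathbb{Z}_+^2$ whose boundary and bulk weights satisfy $(R^1,R^2,X)\sim m_{f^1}(a_1)\otimes m_{f^2}(a_2)\otimes m_{f^1}(a_3)$ with (IG) $\theta\in(0,\mu)$, $f^1(x)=f^2(x)=e^{-\beta/x}$, $(a_1,a_2,a_3)=(\theta-\mu,-\theta,-\mu)$; (G) $\theta>0$, $f^1(x)=e^{-\beta x}$, $f^2(x)=(1-1/x)^{\mu-1}\mathbf 1_{\{x>1\}}$, $(a_1,a_2,a_3)=(\mu+\theta,-\theta,\mu)$; (B) $\theta>0$, $f^1(x)=(1-x)^{\beta-1}\mathbf 1_{\{0<x<1\}}$, $f^2(x)=(1-1/x)^{\mu-1}\mathbf 1_{\{x>1\}}$, $(a_1,a_2,a_3)=(\mu+\theta,-\theta,\mu)$;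 (IB) $\theta\in(0,\mu)$, $f^1(x)=(1-1/x)^{\beta-1}\mathbf 1_{\{x>1\}}$, $f^2(x)=(x/(x+1))^{\beta+\mu}$, $(a_1,a_2,a_3)=(\theta-\mu,-\theta,-\mu)$. (The claim concerns only $f^1,f^2,a_1,a_2$ as given here.) *)

theory Defs
  imports "HOL-Analysis.Analysis"
begin

definition mellin :: "(real \<Rightarrow> real) \<Rightarrow> real \<Rightarrow> real" where
  "mellin f a = (LINT x:{0<..}|lborel. x powr (a - 1) * f x)"

definition mellin_psi :: "nat \<Rightarrow> (real \<Rightarrow> real) \<Rightarrow> real \<Rightarrow> real" where
  "mellin_psi n f a = (deriv ^^ Suc n) (\<lambda>b. ln (mellin f b)) a"

definition psi_cross :: "(real \<Rightarrow> real) \<Rightarrow> (real \<Rightarrow> real) \<Rightarrow> real \<Rightarrow> real \<Rightarrow> real" where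
  "psi_cross f1 f2 a1 a2 =
     mellin_psi 1 f1 a1 * mellin_psi 2 f2 a2 + mellin_psi 1 f2 a2 * mellin_psi 2 f1 a1"

end

theory Submission
  imports Defs
begin

(* Every Mellin transform occurring in the four models is an explicit product of Gamma and Beta
   values (substitute x = e^s, and t = e^s / (1 + e^s) for the kernel (x/(x+1))^c), so each psi_n
   is a signed combination of polygamma values. Positivity then rests on the signs
   Polygamma 1 > 0 > Polygamma 2 and on the strict increase of Polygamma (n+1) / Polygamma n, whose
   derivative is positive by the Cauchy-Schwarz inequality
   Polygamma (n+1) ^ 2 < Polygamma n * Polygamma (n+2) for the series
   Polygamma n x = (-1)^(n+1) n! sum_k (x+k)^(-n-1). The beta model also needs Cauchy's mean value
   theorem, to compare chord slopes of the curve t |-> (Polygamma 1 t, Polygamma 2 t). *)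

section \<open>Polygamma inequalities\<close>

definition hurwitz_zeta :: "nat \<Rightarrow> real \<Rightarrow> real" where
  "hurwitz_zeta m x = (\<Sum>k. inverse ((x + real k) ^ m))"

lemma hurwitz_zeta_sums:
  assumes "x > 0" "m \<ge> 2"
  shows "(\<lambda>k. inverse ((x + real k) ^ m)) sums hurwitz_zeta m x"
  using Polygamma_converges'[of x m] assms by (simp add: hurwitz_zeta_def summable_sums)

lemma hurwitz_zeta_pos:
  assumes "x > 0" "m \<ge> 2"
  shows "hurwitz_zeta m x > 0"
  using hurwitz_zeta_sums[OF assms] assms unfolding hurwitz_zeta_def
  by (intro suminf_pos) (auto simp: sums_iff)

lemma Polygamma_eq_hurwitz_zeta:
  assumes "n > 0"
  shows "Polygamma n x = (-1) ^ Suc n * fact n * hurwitz_zeta (Suc n) x"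
  using assms by (simp add: Polygamma_def hurwitz_zeta_def)

lemma hurwitz_zeta_sq_le:
  assumes "x > 0" "m \<ge> 2"
  shows "hurwitz_zeta (Suc m) x ^ 2 \<le> hurwitz_zeta m x * hurwitz_zeta (Suc (Suc m)) x"
proof -
  define c where "c k = inverse (x + real k)" for k
  have c_pos: "c k > 0" for k
    using assms by (simp add: c_def)
  have sums: "(\<lambda>k. c k ^ j) sums hurwitz_zeta j x" if "j \<ge> 2" for j
    using hurwitz_zeta_sums[of x j] assms that by (simp add: c_def power_inverse)
  have partial: "(\<Sum>k<N. c k ^ Suc m) ^ 2 \<le> (\<Sum>k<N. c k ^ m) * (\<Sum>k<N. c k ^ Suc (Suc m))" for N
  proof -
    have "(\<Sum>k<N. sqrt (c k ^ m) * sqrt (c k ^ Suc (Suc m))) ^ 2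
        \<le> (\<Sum>k<N. sqrt (c k ^ m) ^ 2) * (\<Sum>k<N. sqrt (c k ^ Suc (Suc m)) ^ 2)"
      by (rule Cauchy_Schwarz_ineq_sum)
    moreover have "sqrt (c k ^ m) * sqrt (c k ^ Suc (Suc m)) = c k ^ Suc m" for k
    proof -
      have "sqrt (c k ^ m) * sqrt (c k ^ Suc (Suc m)) = sqrt ((c k ^ Suc m) ^ 2)"
        by (simp only: real_sqrt_mult[symmetric]) (simp add: power2_eq_square algebra_simps)
      thus ?thesis
        using c_pos[of k] by simp
    qed
    moreover have "sqrt (c k ^ j) ^ 2 = c k ^ j" for k j
      using c_pos[of k] by simp
    ultimately show ?thesis
      by (simp only:)
  qed
  have "(\<lambda>N. (\<Sum>k<N. c k ^ Suc m) ^ 2) \<longlonglongrightarrow> hurwitz_zeta (Suc m) x ^ 2"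
    using sums[of "Suc m"] assms by (intro tendsto_intros) (simp add: sums_def)
  moreover have "(\<lambda>N. (\<Sum>k<N. c k ^ m) * (\<Sum>k<N. c k ^ Suc (Suc m)))
      \<longlonglongrightarrow> hurwitz_zeta m x * hurwitz_zeta (Suc (Suc m)) x"
    using sums[of m] sums[of "Suc (Suc m)"] assms by (intro tendsto_intros) (simp_all add: sums_def)
  ultimately show ?thesis
    using partial by (intro LIMSEQ_le) auto
qed

lemma Polygamma_sq_less:
  assumes "(x::real) > 0" "n > 0"
  shows "Polygamma (Suc n) x ^ 2 < Polygamma n x * Polygamma (Suc (Suc n)) x"
proof -
  define z where "z j = hurwitz_zeta j x" for j
  have z_pos: "z (Suc (Suc n)) > 0"
    using hurwitz_zeta_pos[OF assms(1)] by (simp add: z_def)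
  have z_sq: "z (Suc (Suc n)) ^ 2 \<le> z (Suc n) * z (Suc (Suc (Suc n)))"
    using hurwitz_zeta_sq_le[OF assms(1), of "Suc n"] assms(2) by (simp add: z_def)
  have fact_pos: "fact n > (0::real)"
    by simp
  have sign_sq: "((-1::real) ^ k) ^ 2 = 1" for k
    by (simp flip: power_mult)
  have "Polygamma (Suc n) x ^ 2 = ((-1) ^ n * ((real n + 1) * fact n * z (Suc (Suc n)))) ^ 2"
    by (simp add: Polygamma_eq_hurwitz_zeta z_def algebra_simps)
  also have "\<dots> = (fact n) ^ 2 * ((real n + 1) ^ 2 * z (Suc (Suc n)) ^ 2)"
    by (simp only: power_mult_distrib sign_sq) (simp add: algebra_simps)
  also have "\<dots> < (fact n) ^ 2 * ((real n + 1) * (real n + 2) * z (Suc (Suc n)) ^ 2)"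
    using z_pos fact_pos by (intro mult_strict_left_mono) (simp_all add: power2_eq_square)
  also have "\<dots> \<le> (fact n) ^ 2 * ((real n + 1) * (real n + 2) * (z (Suc n) * z (Suc (Suc (Suc n)))))"
    using z_sq by (intro mult_left_mono) simp_all
  also have "\<dots> = ((-1) ^ Suc n) ^ 2 * (fact n * z (Suc n))
      * ((real n + 1) * (real n + 2) * fact n * z (Suc (Suc (Suc n))))"
    by (simp only: sign_sq) (simp add: power2_eq_square algebra_simps)
  also have "\<dots> = Polygamma n x * Polygamma (Suc (Suc n)) x"
    using assms(2) by (simp add: Polygamma_eq_hurwitz_zeta z_def power2_eq_square algebra_simps)
  finally show ?thesis .
qed

lemma Polygamma_real_nonzero:
  assumes "(x::real) > 0" "n > 0"
  shows "Polygamma n x \<noteq> 0"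
  using assms hurwitz_zeta_pos[OF assms(1), of "Suc n"] by (simp add: Polygamma_eq_hurwitz_zeta)

lemma Polygamma_mult_pos:
  assumes "(x::real) > 0" "y > 0" "n > 0"
  shows "Polygamma n x * Polygamma n y > 0"
proof -
  have "Polygamma n x * Polygamma n y
      = ((-1) ^ Suc n) ^ 2 * (fact n) ^ 2 * (hurwitz_zeta (Suc n) x * hurwitz_zeta (Suc n) y)"
    using assms(3) by (simp add: Polygamma_eq_hurwitz_zeta power2_eq_square algebra_simps)
  also have "\<dots> > 0"
    using hurwitz_zeta_pos[OF assms(1), of "Suc n"] hurwitz_zeta_pos[OF assms(2), of "Suc n"] assms(3)
    by (simp flip: power_mult)
  finally show ?thesis .
qed

lemma Polygamma_ratio_strict_mono:
  assumes "0 < x" "x < (y::real)" "n > 0"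
  shows "Polygamma (Suc n) x / Polygamma n x < Polygamma (Suc n) y / Polygamma n y"
proof (rule DERIV_pos_imp_increasing[OF assms(2)])
  fix z assume "x \<le> z" "z \<le> y"
  hence z: "z > 0"
    using assms by simp
  have "DERIV (\<lambda>t. Polygamma (Suc n) t / Polygamma n t) z :>
      (Polygamma (Suc (Suc n)) z * Polygamma n z - Polygamma (Suc n) z * Polygamma (Suc n) z)
        / (Polygamma n z * Polygamma n z)"
    using z Polygamma_real_nonzero[OF z assms(3)]
    by (auto intro!: derivative_eq_intros simp: power2_eq_square)
  moreover have "(Polygamma (Suc (Suc n)) z * Polygamma n z - Polygamma (Suc n) z * Polygamma (Suc n) z)
        / (Polygamma n z * Polygamma n z) > 0"
    using Polygamma_sq_less[OF z assms(3)] Polygamma_mult_pos[OF z z assms(3)]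
    by (intro divide_pos_pos) (simp_all add: power2_eq_square algebra_simps)
  ultimately show "\<exists>d. DERIV (\<lambda>t. Polygamma (Suc n) t / Polygamma n t) z :> d \<and> d > 0"
    by blast
qed

lemma Polygamma_cross_pos:
  assumes "0 < x" "x < (y::real)" "n > 0"
  shows "Polygamma n x * Polygamma (Suc n) y - Polygamma n y * Polygamma (Suc n) x > 0"
proof -
  have "Polygamma n x * Polygamma (Suc n) y - Polygamma n y * Polygamma (Suc n) x
      = (Polygamma n x * Polygamma n y)
        * (Polygamma (Suc n) y / Polygamma n y - Polygamma (Suc n) x / Polygamma n x)"
    using Polygamma_real_nonzero[of x n] Polygamma_real_nonzero[of y n] assms
    by (simp add: field_simps)
  also have "\<dots> > 0"
    using Polygamma_mult_pos[of x y n] Polygamma_ratio_strict_mono[OF assms] assms by simp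
  finally show ?thesis .
qed

lemma Polygamma_chord_slope:
  assumes "0 < x" "x < (y::real)" "n > 0"
  obtains \<xi> where "x < \<xi>" "\<xi> < y"
    "Polygamma (Suc n) y - Polygamma (Suc n) x
       = (Polygamma n y - Polygamma n x) * (Polygamma (Suc (Suc n)) \<xi> / Polygamma (Suc n) \<xi>)"
proof -
  have deriv: "DERIV (Polygamma k) z :> Polygamma (Suc k) z" if "z > 0" for k and z :: real
    using that by (intro has_field_derivative_Polygamma) auto
  obtain \<xi> where \<xi>: "x < \<xi>" "\<xi> < y"
    "(Polygamma (Suc n) y - Polygamma (Suc n) x) * Polygamma (Suc n) \<xi>
       = (Polygamma n y - Polygamma n x) * Polygamma (Suc (Suc n)) \<xi>"
    using GMVT'[OF assms(2), of "Polygamma (Suc n)" "Polygamma n" "Polygamma (Suc n)"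
        "Polygamma (Suc (Suc n))"] assms deriv DERIV_isCont[OF deriv]
    by auto
  moreover have "Polygamma (Suc n) \<xi> \<noteq> 0"
    using Polygamma_real_nonzero[of \<xi> "Suc n"] \<xi> assms by simp
  ultimately show ?thesis
    by (intro that[of \<xi>]) (simp_all add: field_simps)
qed

lemma Polygamma_chord_cross_pos:
  assumes "0 < x" "x < y" "y < (c::real)"
  shows "(Polygamma 1 y - Polygamma 1 c) * (Polygamma 2 y - Polygamma 2 x)
       + (Polygamma 1 x - Polygamma 1 y) * (Polygamma 2 y - Polygamma 2 c) > 0"
proof -
  obtain \<xi> where \<xi>: "x < \<xi>" "\<xi> < y"
      "Polygamma 2 y - Polygamma 2 x = (Polygamma 1 y - Polygamma 1 x) * (Polygamma 3 \<xi> / Polygamma 2 \<xi>)"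
    using Polygamma_chord_slope[OF assms(1,2), of 1] by (auto simp: numeral_eq_Suc)
  obtain \<eta> where \<eta>: "y < \<eta>" "\<eta> < c"
      "Polygamma 2 c - Polygamma 2 y = (Polygamma 1 c - Polygamma 1 y) * (Polygamma 3 \<eta> / Polygamma 2 \<eta>)"
    using Polygamma_chord_slope[of y c 1] assms by (auto simp: numeral_eq_Suc)
  define k1 k2 where "k1 = Polygamma 3 \<xi> / Polygamma 2 \<xi>" and "k2 = Polygamma 3 \<eta> / Polygamma 2 \<eta>"
  define A B where "A = Polygamma 1 y - Polygamma 1 c" and "B = Polygamma 1 x - Polygamma 1 y"
  have "k1 < k2"
    using Polygamma_ratio_strict_mono[of \<xi> \<eta> 2] \<xi> \<eta> assms by (simp add: k1_def k2_def numeral_eq_Suc)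
  moreover have "A > 0" "B > 0"
    using Polygamma_real_strict_antimono[of _ _ 1] assms by (auto simp: A_def B_def)
  ultimately have pos: "A * B * (k2 - k1) > 0"
    by simp
  have "Polygamma 2 y - Polygamma 2 x = - (B * k1)"
    using \<xi>(3) unfolding k1_def[symmetric] by (simp add: B_def algebra_simps)
  moreover have "Polygamma 2 y - Polygamma 2 c = A * k2"
    using \<eta>(3) unfolding k2_def[symmetric] by (simp add: A_def algebra_simps)
  ultimately have "A * (Polygamma 2 y - Polygamma 2 x) + B * (Polygamma 2 y - Polygamma 2 c)
      = A * B * (k2 - k1)"
    by (simp only:) (simp add: algebra_simps)
  thus ?thesis
    using pos by (simp add: A_def B_def)
qed

section \<open>Derivative towers\<close>

definition derivative_tower :: "real set \<Rightarrow> (nat \<Rightarrow> real \<Rightarrow> real) \<Rightarrow> bool" where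
  "derivative_tower S G \<longleftrightarrow> (\<forall>j. \<forall>x\<in>S. (G j has_real_derivative G (Suc j) x) (at x))"

lemma iterated_deriv_eq_derivative_tower:
  assumes "open S" "derivative_tower S G" "\<And>x. x \<in> S \<Longrightarrow> F x = G 0 x" "x \<in> S"
  shows "(deriv ^^ j) F x = G j x"
  using assms(4)
proof (induction j arbitrary: x)
  case 0
  thus ?case
    using assms(3) by simp
next
  case (Suc j)
  have "(G j has_real_derivative G (Suc j) x) (at x)"
    using assms(2) Suc.prems by (simp add: derivative_tower_def)
  hence "((deriv ^^ j) F has_real_derivative G (Suc j) x) (at x)"
    by (rule has_field_derivative_transform_within_open[OF _ assms(1) Suc.prems]) (use Suc.IH in simp)
  thus ?case
    by (simp add: DERIV_imp_deriv)
qed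

lemma derivative_tower_add:
  "derivative_tower S G \<Longrightarrow> derivative_tower S H \<Longrightarrow> derivative_tower S (\<lambda>j x. G j x + H j x)"
  unfolding derivative_tower_def by (auto intro!: derivative_intros)

lemma derivative_tower_diff:
  "derivative_tower S G \<Longrightarrow> derivative_tower S H \<Longrightarrow> derivative_tower S (\<lambda>j x. G j x - H j x)"
  unfolding derivative_tower_def by (auto intro!: derivative_intros)

lemma derivative_tower_affine:
  "derivative_tower S (\<lambda>j x. if j = 0 then c * x + d else if j = 1 then c else 0)"
  unfolding derivative_tower_def
proof (intro allI ballI)
  fix j x
  show "((\<lambda>x. if j = 0 then c * x + d else if j = 1 then c else 0) has_real_derivative
      (if Suc j = 0 then c * x + d else if Suc j = 1 then c else 0)) (at x)"
    by (cases j) (auto intro!: derivative_eq_intros)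
qed

lemma derivative_tower_compose_affine:
  assumes "derivative_tower T G" "\<And>x. x \<in> S \<Longrightarrow> c * x + d \<in> T"
  shows "derivative_tower S (\<lambda>j x. c ^ j * G j (c * x + d))"
  unfolding derivative_tower_def
proof (intro allI ballI)
  fix j x assume "x \<in> S"
  hence "(G j has_real_derivative G (Suc j) (c * x + d)) (at (c * x + d))"
    using assms unfolding derivative_tower_def by blast
  hence "((\<lambda>x. G j (c * x + d)) has_real_derivative G (Suc j) (c * x + d) * c) (at x)"
    by (rule DERIV_chain2) (auto intro!: derivative_eq_intros)
  hence "((\<lambda>x. c ^ j * G j (c * x + d)) has_real_derivative c ^ j * (G (Suc j) (c * x + d) * c)) (at x)"
    by (rule DERIV_cmult)
  thus "((\<lambda>x. c ^ j * G j (c * x + d)) has_real_derivative c ^ Suc j * G (Suc j) (c * x + d)) (at x)"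
    by (simp add: algebra_simps)
qed

definition ln_Gamma_tower :: "nat \<Rightarrow> real \<Rightarrow> real" where
  "ln_Gamma_tower j x = (if j = 0 then ln_Gamma x else Polygamma (j - 1) x)"

lemma ln_Gamma_tower_simps [simp]:
  "ln_Gamma_tower 0 x = ln_Gamma x" "ln_Gamma_tower (Suc j) x = Polygamma j x"
  by (simp_all add: ln_Gamma_tower_def)

lemma derivative_tower_ln_Gamma: "derivative_tower {0<..} ln_Gamma_tower"
  unfolding derivative_tower_def
proof (intro allI ballI)
  fix j and x :: real assume "x \<in> {0<..}"
  moreover have "ln_Gamma_tower j = (if j = 0 then ln_Gamma else Polygamma (j - 1))"
    by (auto simp: ln_Gamma_tower_def)
  ultimately show "(ln_Gamma_tower j has_real_derivative ln_Gamma_tower (Suc j) x) (at x)"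
    by (cases j) (auto intro!: derivative_eq_intros)
qed

section \<open>Mellin transforms\<close>

lemma nn_integral_indicator_incseq_Union:
  fixes f :: "real \<Rightarrow> ennreal"
  assumes [measurable]: "f \<in> borel_measurable borel" "\<And>n. A n \<in> sets borel" and "incseq A"
  shows "(\<integral>\<^sup>+x. f x * indicator (\<Union>n. A n) x \<partial>lborel)
    = (SUP n. \<integral>\<^sup>+x. f x * indicator (A n) x \<partial>lborel)"
proof -
  have "emeasure (density lborel f) (\<Union>n. A n) = (SUP n. emeasure (density lborel f) (A n))"
    using assms by (intro SUP_emeasure_incseq[symmetric]) auto
  thus ?thesis
    by (simp add: emeasure_density)
qed

lemma Union_Icc_image_eq_range:
  fixes g :: "real \<Rightarrow> real"
  assumes "mono g" "continuous_on UNIV g"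
  shows "(\<Union>n::nat. {g (- real n)..g (real n)}) = range g"
proof (intro equalityI subsetI)
  fix y assume "y \<in> (\<Union>n::nat. {g (- real n)..g (real n)})"
  then obtain n :: nat where "g (- real n) \<le> y" "y \<le> g (real n)"
    by auto
  moreover have "continuous_on {- real n..real n} g"
    using assms(2) by (rule continuous_on_subset) simp
  ultimately obtain x where "y = g x"
    using IVT'[of g "- real n" y "real n"] by force
  thus "y \<in> range g"
    by simp
next
  fix y assume "y \<in> range g"
  then obtain x where x: "y = g x"
    by auto
  obtain n :: nat where "\<bar>x\<bar> \<le> real n"
    using real_arch_simple by blast
  hence "g (- real n) \<le> y" "y \<le> g (real n)"
    unfolding x by (simp_all add: monoD[OF assms(1)])
  thus "y \<in> (\<Union>n::nat. {g (- real n)..g (real n)})"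
    by auto
qed

lemma incseq_Icc_image:
  fixes g :: "real \<Rightarrow> real"
  assumes "mono g"
  shows "incseq (\<lambda>n::nat. {g (- real n)..g (real n)})"
proof (intro monoI subsetI)
  fix m n :: nat and y assume "m \<le> n" "y \<in> {g (- real m)..g (real m)}"
  moreover have "g (- real n) \<le> g (- real m)" "g (real m) \<le> g (real n)"
    using \<open>m \<le> n\<close> by (simp_all add: monoD[OF assms])
  ultimately show "y \<in> {g (- real n)..g (real n)}"
    by simp
qed

lemma nn_integral_substitution_range:
  fixes f g g' :: "real \<Rightarrow> real"
  assumes [measurable]: "f \<in> borel_measurable borel"
    and deriv: "\<And>x. (g has_real_derivative g' x) (at x)"
    and cont: "continuous_on UNIV g'" and nonneg: "\<And>x. g' x \<ge> 0"
  shows "(\<integral>\<^sup>+x. ennreal (f x) * indicator (range g) x \<partial>lborel)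
    = (\<integral>\<^sup>+x. ennreal (f (g x) * g' x) \<partial>lborel)"
proof -
  have "mono g"
  proof (rule monoI)
    fix x y :: real assume "x \<le> y"
    thus "g x \<le> g y"
      using deriv nonneg by (intro DERIV_nonneg_imp_nondecreasing[OF \<open>x \<le> y\<close>]) blast
  qed
  moreover have g_cont: "continuous_on UNIV g"
    using deriv by (intro DERIV_continuous_on) simp
  ultimately have range: "range g = (\<Union>n::nat. {g (- real n)..g (real n)})"
    by (rule Union_Icc_image_eq_range[symmetric])
  have [measurable]: "g \<in> borel_measurable borel" "g' \<in> borel_measurable borel"
    using g_cont cont by (simp_all add: borel_measurable_continuous_onI)
  have UNIV_eq: "UNIV = (\<Union>n::nat. {- real n..real n})"
    using Union_Icc_image_eq_range[of id] by (simp add: mono_def)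
  have "(\<integral>\<^sup>+x. ennreal (f x) * indicator (range g) x \<partial>lborel)
      = (SUP n::nat. \<integral>\<^sup>+x. ennreal (f x) * indicator {g (- real n)..g (real n)} x \<partial>lborel)"
    unfolding range
    by (rule nn_integral_indicator_incseq_Union[OF _ _ incseq_Icc_image[OF \<open>mono g\<close>]]) auto
  also have "\<dots> = (SUP n::nat. \<integral>\<^sup>+x. ennreal (f (g x) * g' x) * indicator {- real n..real n} x \<partial>lborel)"
  proof (rule SUP_cong[OF refl])
    fix n :: nat
    have "set_borel_measurable borel {g (- real n)..g (real n)} f"
      unfolding set_borel_measurable_def by measurable
    thus "(\<integral>\<^sup>+x. ennreal (f x) * indicator {g (- real n)..g (real n)} x \<partial>lborel)
        = (\<integral>\<^sup>+x. ennreal (f (g x) * g' x) * indicator {- real n..real n} x \<partial>lborel)"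
      using nn_integral_substitution[OF _ deriv continuous_on_subset[OF cont] nonneg]
      by (simp add: mult.commute[of _ "indicator _ _"] indicator_mult_ennreal)
  qed
  also have "\<dots> = (\<integral>\<^sup>+x. ennreal (f (g x) * g' x) * indicator (\<Union>n::nat. {- real n..real n}) x \<partial>lborel)"
    using nn_integral_indicator_incseq_Union[OF _ _ incseq_Icc_image[of id]] by (simp add: mono_def)
  finally show ?thesis
    by (simp flip: UNIV_eq)
qed

(* Unlike the Bochner integral in mellin, which is 0 on non-integrable functions, this
   extended-valued transform makes the change-of-variable lemmas below unconditional. *)
definition mellin_ennreal :: "(real \<Rightarrow> real) \<Rightarrow> real \<Rightarrow> ennreal" where
  "mellin_ennreal f a = (\<integral>\<^sup>+x. ennreal (x powr (a - 1) * f x) * indicator {0<..} x \<partial>lborel)"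

lemma mellin_eq_of_mellin_ennreal:
  assumes [measurable]: "f \<in> borel_measurable borel" and nonneg: "\<And>x. x > 0 \<Longrightarrow> f x \<ge> 0"
    and "mellin_ennreal f a = ennreal V" "V \<ge> 0"
  shows "mellin f a = V"
proof -
  let ?g = "\<lambda>x. x powr (a - 1) * f x * indicator {0<..} x"
  have "(\<integral>\<^sup>+x. ennreal (?g x) \<partial>lborel) = ennreal V"
    using assms(3) unfolding mellin_ennreal_def
    by (simp add: mult.commute[of _ "indicator _ _"] indicator_mult_ennreal)
  hence "integrable lborel ?g" "integral\<^sup>L lborel ?g = V"
    using nn_integral_eq_integrable[of ?g lborel V] nonneg \<open>V \<ge> 0\<close>
    by (auto simp: indicator_def)
  thus ?thesis
    by (simp add: mellin_def set_lebesgue_integral_def mult.commute)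
qed

lemma range_exp_real: "range (exp :: real \<Rightarrow> real) = {0<..}"
proof (intro equalityI subsetI)
  fix x :: real assume "x \<in> {0<..}"
  hence "x = exp (ln x)"
    by simp
  thus "x \<in> range exp"
    by (rule range_eqI)
qed auto

lemma mellin_ennreal_eq_exp_integral:
  assumes [measurable]: "f \<in> borel_measurable borel"
  shows "mellin_ennreal f a = (\<integral>\<^sup>+s. ennreal (exp (a * s) * f (exp s)) \<partial>lborel)"
proof -
  have "mellin_ennreal f a = (\<integral>\<^sup>+s. ennreal (exp s powr (a - 1) * f (exp s) * exp s) \<partial>lborel)"
    unfolding mellin_ennreal_def range_exp_real[symmetric]
    by (rule nn_integral_substitution_range) (auto intro!: derivative_eq_intros continuous_intros)
  also have "\<dots> = (\<integral>\<^sup>+s. ennreal (exp (a * s) * f (exp s)) \<partial>lborel)"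
  proof (intro nn_integral_cong arg_cong[where f = ennreal])
    fix s
    have "exp s powr (a - 1) * exp s = exp (a * s)"
      by (simp add: powr_def exp_add[symmetric] algebra_simps)
    thus "exp s powr (a - 1) * f (exp s) * exp s = exp (a * s) * f (exp s)"
      by (simp add: algebra_simps)
  qed
  finally show ?thesis .
qed

lemma mellin_ennreal_inverse:
  assumes [measurable]: "f \<in> borel_measurable borel"
  shows "mellin_ennreal (\<lambda>x. f (1 / x)) a = mellin_ennreal f (- a)"
proof -
  have "mellin_ennreal f (- a) = (\<integral>\<^sup>+s. ennreal (exp (- a * s) * f (exp s)) \<partial>lborel)"
    by (rule mellin_ennreal_eq_exp_integral) simp
  also have "\<dots> = (\<integral>\<^sup>+s. ennreal (exp (- a * (0 + (-1) * s)) * f (exp (0 + (-1) * s))) \<partial>lborel)"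
    using nn_integral_real_affine[of "\<lambda>s. ennreal (exp (- a * s) * f (exp s))" "-1" 0] by simp
  also have "\<dots> = mellin_ennreal (\<lambda>x. f (1 / x)) a"
    by (subst mellin_ennreal_eq_exp_integral) (simp_all add: exp_minus inverse_eq_divide)
  finally show ?thesis ..
qed

lemma mellin_ennreal_scale:
  assumes [measurable]: "f \<in> borel_measurable borel" and "c > 0"
  shows "mellin_ennreal (\<lambda>x. f (c * x)) a = ennreal (c powr (- a)) * mellin_ennreal f a"
proof -
  have "mellin_ennreal (\<lambda>x. f (c * x)) a = (\<integral>\<^sup>+s. ennreal (exp (a * s) * f (c * exp s)) \<partial>lborel)"
    by (rule mellin_ennreal_eq_exp_integral) simp
  also have "\<dots> = (\<integral>\<^sup>+s. ennreal (exp (a * (- ln c + 1 * s)) * f (c * exp (- ln c + 1 * s))) \<partial>lborel)"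
    using nn_integral_real_affine[of "\<lambda>s. ennreal (exp (a * s) * f (c * exp s))" 1 "- ln c"] by simp
  also have "\<dots> = (\<integral>\<^sup>+s. ennreal (c powr (- a)) * ennreal (exp (a * s) * f (exp s)) \<partial>lborel)"
  proof (intro nn_integral_cong)
    fix s
    have "c * exp (- ln c + 1 * s) = exp s"
      using \<open>c > 0\<close> by (simp add: exp_diff)
    moreover have "exp (a * (- ln c + 1 * s)) = c powr (- a) * exp (a * s)"
      using \<open>c > 0\<close> by (simp add: powr_def exp_add[symmetric] algebra_simps)
    ultimately show "ennreal (exp (a * (- ln c + 1 * s)) * f (c * exp (- ln c + 1 * s)))
        = ennreal (c powr (- a)) * ennreal (exp (a * s) * f (exp s))"
      by (simp add: ennreal_mult'[symmetric] mult.assoc)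
  qed
  also have "\<dots> = ennreal (c powr (- a)) * mellin_ennreal f a"
    by (simp add: nn_integral_cmult mellin_ennreal_eq_exp_integral)
  finally show ?thesis .
qed

lemma mellin_ennreal_exp_neg:
  assumes "a > 0"
  shows "mellin_ennreal (\<lambda>x. exp (- x)) a = ennreal (Gamma a)"
  unfolding Gamma_conv_nn_integral_real[OF assms] mellin_ennreal_def
  by (intro nn_integral_cong) (auto simp: indicator_def exp_minus field_simps)

lemma nn_integral_Beta:
  assumes "a > 0" "b > 0"
  shows "(\<integral>\<^sup>+t. ennreal (t powr (a - 1) * (1 - t) powr (b - 1)) * indicator {0<..<1} t \<partial>lborel)
    = ennreal (Beta a b)"
proof -
  have "ennreal (Beta a b)
      = (\<integral>\<^sup>+t. ennreal (indicator {0..1} t * (t powr (a - 1) * (1 - t) powr (b - 1))) \<partial>lborel)"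
    using nn_integral_has_integral_lebesgue[OF _ has_integral_Beta_real[OF assms]] by simp
  also have "\<dots> = (\<integral>\<^sup>+t. ennreal (t powr (a - 1) * (1 - t) powr (b - 1)) * indicator {0<..<1} t \<partial>lborel)"
    by (intro nn_integral_cong) (auto simp: indicator_def)
  finally show ?thesis ..
qed

lemma mellin_ennreal_beta_kernel:
  assumes "a > 0" "b > 0"
  shows "mellin_ennreal (\<lambda>x. if 0 < x \<and> x < 1 then (1 - x) powr (b - 1) else 0) a = ennreal (Beta a b)"
  unfolding nn_integral_Beta[OF assms, symmetric] mellin_ennreal_def
  by (intro nn_integral_cong) (auto simp: indicator_def)

lemma range_logistic: "range (\<lambda>s::real. exp s / (exp s + 1)) = {0<..<1}"
proof (intro equalityI subsetI)
  fix t :: real assume "t \<in> {0<..<1}"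
  hence "t = exp (ln (t / (1 - t))) / (exp (ln (t / (1 - t))) + 1)"
    by (simp add: field_simps)
  thus "t \<in> range (\<lambda>s. exp s / (exp s + 1))"
    by (rule range_eqI)
next
  fix t assume "t \<in> range (\<lambda>s::real. exp s / (exp s + 1))"
  thus "t \<in> {0<..<1}"
    by (auto simp: add_pos_pos)
qed

lemma mellin_ennreal_power_of_ratio:
  assumes "a < 0" "a + c > 0"
  shows "mellin_ennreal (\<lambda>x. (x / (x + 1)) powr c) a = ennreal (Beta (a + c) (- a))"
proof -
  define F where "F t = t powr (a + c - 1) * (1 - t) powr (- a - 1)" for t :: real
  have "ennreal (Beta (a + c) (- a)) = (\<integral>\<^sup>+t. ennreal (F t) * indicator {0<..<1} t \<partial>lborel)"
    using nn_integral_Beta[of "a + c" "- a"] assms by (simp add: F_def)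
  also have "\<dots> = (\<integral>\<^sup>+s. ennreal (F (exp s / (exp s + 1)) * (exp s / (exp s + 1) ^ 2)) \<partial>lborel)"
  proof -
    have nonzero: "1 + exp s \<noteq> 0" "1 + (exp s * exp s + exp s * 2) \<noteq> 0" for s :: real
      by (simp_all add: add_pos_pos add_nonneg_eq_0_iff)
    show ?thesis
      unfolding range_logistic[symmetric] F_def
      by (intro nn_integral_substitution_range)
         (auto intro!: derivative_eq_intros continuous_intros simp: nonzero power2_eq_square field_simps)
  qed
  also have "\<dots> = (\<integral>\<^sup>+s. ennreal (exp (a * s) * (exp s / (exp s + 1)) powr c) \<partial>lborel)"
  proof (intro nn_integral_cong arg_cong[where f = ennreal])
    fix s :: real
    define L where "L = ln (exp s + 1)"
    have "exp s + 1 = exp L"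
      by (simp add: L_def add_pos_pos)
    hence "exp s / (exp s + 1) = exp (s - L)" "1 - exp s / (exp s + 1) = exp (- L)"
        "exp s / (exp s + 1) ^ 2 = exp (s - 2 * L)"
      by (simp_all add: exp_diff exp_minus field_simps power2_eq_square flip: exp_add)
    thus "F (exp s / (exp s + 1)) * (exp s / (exp s + 1) ^ 2) = exp (a * s) * (exp s / (exp s + 1)) powr c"
      by (simp add: F_def exp_powr_real flip: exp_add) (simp add: algebra_simps)
  qed
  also have "\<dots> = mellin_ennreal (\<lambda>x. (x / (x + 1)) powr c) a"
    by (simp add: mellin_ennreal_eq_exp_integral)
  finally show ?thesis ..
qed

lemma mellin_exp_scaled:
  assumes "b > 0" "a > 0"
  shows "mellin (\<lambda>x. exp (- b * x)) a = b powr (- a) * Gamma a"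
proof (rule mellin_eq_of_mellin_ennreal)
  have "mellin_ennreal (\<lambda>x. exp (- b * x)) a = ennreal (b powr (- a)) * mellin_ennreal (\<lambda>x. exp (- x)) a"
    using mellin_ennreal_scale[of "\<lambda>y. exp (- y)" b a] assms by simp
  thus "mellin_ennreal (\<lambda>x. exp (- b * x)) a = ennreal (b powr (- a) * Gamma a)"
    using assms by (simp add: mellin_ennreal_exp_neg ennreal_mult Gamma_real_pos less_imp_le)
qed (use assms in \<open>auto simp: Gamma_real_pos less_imp_le\<close>)

lemma mellin_exp_inverse_scaled:
  assumes "b > 0" "a < 0"
  shows "mellin (\<lambda>x. exp (- b / x)) a = b powr a * Gamma (- a)"
proof (rule mellin_eq_of_mellin_ennreal)
  have "mellin_ennreal (\<lambda>x. exp (- b / x)) a = mellin_ennreal (\<lambda>y. exp (- b * y)) (- a)"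
    using mellin_ennreal_inverse[of "\<lambda>y. exp (- b * y)" a] by simp
  also have "\<dots> = ennreal (b powr a) * mellin_ennreal (\<lambda>x. exp (- x)) (- a)"
    using mellin_ennreal_scale[of "\<lambda>y. exp (- y)" b "- a"] assms by simp
  finally show "mellin_ennreal (\<lambda>x. exp (- b / x)) a = ennreal (b powr a * Gamma (- a))"
    using assms by (simp add: mellin_ennreal_exp_neg ennreal_mult Gamma_real_pos less_imp_le)
qed (use assms in \<open>auto simp: Gamma_real_pos less_imp_le\<close>)

lemma mellin_beta_kernel:
  assumes "a > 0" "b > 0"
  shows "mellin (\<lambda>x. if 0 < x \<and> x < 1 then (1 - x) powr (b - 1) else 0) a = Beta a b"
  using assms by (intro mellin_eq_of_mellin_ennreal mellin_ennreal_beta_kernel)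
    (auto simp: Beta_def Gamma_real_pos less_imp_le)

lemma mellin_beta_kernel_inverse:
  assumes "b > 0" "a < 0"
  shows "mellin (\<lambda>x. if x > 1 then (1 - 1 / x) powr (b - 1) else 0) a = Beta (- a) b"
proof (rule mellin_eq_of_mellin_ennreal)
  have "(\<lambda>x. if x > 1 then (1 - 1 / x) powr (b - 1) else 0)
      = (\<lambda>x. (\<lambda>y. if 0 < y \<and> y < 1 then (1 - y) powr (b - 1) else 0) (1 / x))"
    by (auto simp: fun_eq_iff field_simps)
  thus "mellin_ennreal (\<lambda>x. if x > 1 then (1 - 1 / x) powr (b - 1) else 0) a = ennreal (Beta (- a) b)"
    using mellin_ennreal_inverse[of "\<lambda>y. if 0 < y \<and> y < 1 then (1 - y) powr (b - 1) else 0" a]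
      mellin_ennreal_beta_kernel[of "- a" b] assms
    by simp
qed (use assms in \<open>auto simp: Beta_def Gamma_real_pos less_imp_le\<close>)

lemma mellin_power_of_ratio:
  assumes "a < 0" "a + c > 0"
  shows "mellin (\<lambda>x. (x / (x + 1)) powr c) a = Beta (a + c) (- a)"
  using assms by (intro mellin_eq_of_mellin_ennreal mellin_ennreal_power_of_ratio)
    (auto simp: Beta_def Gamma_real_pos less_imp_le)

section \<open>Logarithmic derivatives\<close>

lemma mellin_psi_eq_derivative_tower:
  assumes "open S" "derivative_tower S G" "\<And>x. x \<in> S \<Longrightarrow> ln (mellin f x) = G 0 x" "a \<in> S"
  shows "mellin_psi n f a = G (Suc n) a"
  unfolding mellin_psi_def by (rule iterated_deriv_eq_derivative_tower[OF assms])

lemma mellin_psi_exp_scaled: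
  assumes "b > 0" "a > 0" "n > 0"
  shows "mellin_psi n (\<lambda>x. exp (- b * x)) a = Polygamma n a"
proof -
  let ?G = "\<lambda>j x. (if j = 0 then - ln b * x + 0 else if j = 1 then - ln b else 0)
    + 1 ^ j * ln_Gamma_tower j (1 * x + 0)"
  have tower: "derivative_tower {0<..} ?G"
    by (intro derivative_tower_add derivative_tower_affine
        derivative_tower_compose_affine[OF derivative_tower_ln_Gamma]) auto
  have ln_mellin: "ln (mellin (\<lambda>x. exp (- b * x)) x) = ?G 0 x" if "x \<in> {0<..}" for x
    using that assms mellin_exp_scaled[of b x]
    by (simp add: ln_mult ln_powr ln_Gamma_real_pos Gamma_real_pos[THEN dual_order.strict_implies_not_eq])
  show ?thesis
    using mellin_psi_eq_derivative_tower[OF _ tower ln_mellin, of a n] assms by simp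
qed

lemma mellin_psi_exp_inverse_scaled:
  assumes "b > 0" "a < 0" "n > 0"
  shows "mellin_psi n (\<lambda>x. exp (- b / x)) a = (-1) ^ Suc n * Polygamma n (- a)"
proof -
  let ?G = "\<lambda>j x. (if j = 0 then ln b * x + 0 else if j = 1 then ln b else 0)
    + (-1) ^ j * ln_Gamma_tower j (-1 * x + 0)"
  have tower: "derivative_tower {..<0} ?G"
    by (intro derivative_tower_add derivative_tower_affine
        derivative_tower_compose_affine[OF derivative_tower_ln_Gamma]) auto
  have ln_mellin: "ln (mellin (\<lambda>x. exp (- b / x)) x) = ?G 0 x" if "x \<in> {..<0}" for x
    using that assms mellin_exp_inverse_scaled[of b x]
    by (simp add: ln_mult ln_powr ln_Gamma_real_pos Gamma_real_pos[THEN dual_order.strict_implies_not_eq])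
  show ?thesis
    using mellin_psi_eq_derivative_tower[OF _ tower ln_mellin, of a n] assms by simp
qed

lemma mellin_psi_beta_kernel:
  assumes "b > 0" "a > 0" "n > 0"
  shows "mellin_psi n (\<lambda>x. if 0 < x \<and> x < 1 then (1 - x) powr (b - 1) else 0) a
    = Polygamma n a - Polygamma n (a + b)"
proof -
  let ?G = "\<lambda>j x. (if j = 0 then 0 * x + ln_Gamma b else if j = 1 then 0 else 0)
    + 1 ^ j * ln_Gamma_tower j (1 * x + 0) - 1 ^ j * ln_Gamma_tower j (1 * x + b)"
  have tower: "derivative_tower {0<..} ?G"
    using assms by (intro derivative_tower_add derivative_tower_diff derivative_tower_affine
        derivative_tower_compose_affine[OF derivative_tower_ln_Gamma]) auto
  have ln_mellin: "ln (mellin (\<lambda>x. if 0 < x \<and> x < 1 then (1 - x) powr (b - 1) else 0) x) = ?G 0 x"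
    if "x \<in> {0<..}" for x
    using that assms mellin_beta_kernel[of x b]
    by (simp add: Beta_def ln_mult ln_div ln_Gamma_real_pos Gamma_real_pos[THEN dual_order.strict_implies_not_eq] add.commute)
  show ?thesis
    using mellin_psi_eq_derivative_tower[OF _ tower ln_mellin, of a n] assms by (simp add: add.commute)
qed

lemma mellin_psi_beta_kernel_inverse:
  assumes "b > 0" "a < 0" "n > 0"
  shows "mellin_psi n (\<lambda>x. if x > 1 then (1 - 1 / x) powr (b - 1) else 0) a
    = (-1) ^ Suc n * (Polygamma n (- a) - Polygamma n (b - a))"
proof -
  let ?G = "\<lambda>j x. (if j = 0 then 0 * x + ln_Gamma b else if j = 1 then 0 else 0)
    + (-1) ^ j * ln_Gamma_tower j (-1 * x + 0) - (-1) ^ j * ln_Gamma_tower j (-1 * x + b)"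
  have tower: "derivative_tower {..<0} ?G"
    using assms by (intro derivative_tower_add derivative_tower_diff derivative_tower_affine
        derivative_tower_compose_affine[OF derivative_tower_ln_Gamma]) auto
  have ln_mellin: "ln (mellin (\<lambda>x. if x > 1 then (1 - 1 / x) powr (b - 1) else 0) x) = ?G 0 x"
    if "x \<in> {..<0}" for x
    using that assms mellin_beta_kernel_inverse[of b x]
     
    by (simp add: Beta_def ln_mult ln_div ln_Gamma_real_pos Gamma_real_pos[THEN dual_order.strict_implies_not_eq])
  show ?thesis
    using mellin_psi_eq_derivative_tower[OF _ tower ln_mellin, of a n] assms by (simp add: algebra_simps)
qed

lemma mellin_psi_power_of_ratio:
  assumes "c > 0" "a < 0" "a + c > 0" "n > 0"
  shows "mellin_psi n (\<lambda>x. (x / (x + 1)) powr c) a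
    = Polygamma n (a + c) + (-1) ^ Suc n * Polygamma n (- a)"
proof -
  let ?G = "\<lambda>j x. (if j = 0 then 0 * x + (- ln_Gamma c) else if j = 1 then 0 else 0)
    + 1 ^ j * ln_Gamma_tower j (1 * x + c) + (-1) ^ j * ln_Gamma_tower j (-1 * x + 0)"
  have tower: "derivative_tower {-c<..<0} ?G"
    by (intro derivative_tower_add derivative_tower_affine
        derivative_tower_compose_affine[OF derivative_tower_ln_Gamma]) auto
  have ln_mellin: "ln (mellin (\<lambda>x. (x / (x + 1)) powr c) x) = ?G 0 x" if "x \<in> {-c<..<0}" for x
    using that assms mellin_power_of_ratio[of x c]
     
    by (simp add: Beta_def ln_mult ln_div ln_Gamma_real_pos Gamma_real_pos[THEN dual_order.strict_implies_not_eq] add.commute)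
  show ?thesis
    using mellin_psi_eq_derivative_tower[OF _ tower ln_mellin, of a n] assms by (simp add: add.commute)
qed

lemma psi_cross_inverse_gamma_pos:
  assumes "\<beta> > 0" "0 < \<theta>" "\<theta> < \<mu>"
  shows "psi_cross (\<lambda>x. exp (- \<beta> / x)) (\<lambda>x. exp (- \<beta> / x)) (\<theta> - \<mu>) (- \<theta>) > 0"
proof -
  let ?f = "\<lambda>x. exp (- \<beta> / x)"
  have psi: "mellin_psi 1 ?f (\<theta> - \<mu>) = Polygamma 1 (\<mu> - \<theta>)" "mellin_psi 1 ?f (- \<theta>) = Polygamma 1 \<theta>"
    "mellin_psi 2 ?f (\<theta> - \<mu>) = - Polygamma 2 (\<mu> - \<theta>)" "mellin_psi 2 ?f (- \<theta>) = - Polygamma 2 \<theta>"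
    using assms mellin_psi_exp_inverse_scaled[of \<beta> _ 1] mellin_psi_exp_inverse_scaled[of \<beta> _ 2] by simp_all
  have "Polygamma 1 (\<mu> - \<theta>) * - Polygamma 2 \<theta> + Polygamma 1 \<theta> * - Polygamma 2 (\<mu> - \<theta>) > 0"
    using assms by (intro add_pos_pos mult_pos_pos)
      (auto intro!: Polygamma_real_odd_pos Polygamma_real_even_neg)
  thus ?thesis
    unfolding psi_cross_def psi by simp
qed

lemma psi_cross_gamma_pos:
  assumes "\<beta> > 0" "\<mu> > 0" "\<theta> > 0"
  shows "psi_cross (\<lambda>x. exp (- \<beta> * x)) (\<lambda>x. if x > 1 then (1 - 1 / x) powr (\<mu> - 1) else 0)
    (\<mu> + \<theta>) (- \<theta>) > 0"
proof -
  let ?f1 = "\<lambda>x. exp (- \<beta> * x)" and ?f2 = "\<lambda>x. if x > 1 then (1 - 1 / x) powr (\<mu> - 1) else 0"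
  have psi: "mellin_psi 1 ?f1 (\<mu> + \<theta>) = Polygamma 1 (\<mu> + \<theta>)" "mellin_psi 2 ?f1 (\<mu> + \<theta>) = Polygamma 2 (\<mu> + \<theta>)"
    "mellin_psi 1 ?f2 (- \<theta>) = Polygamma 1 \<theta> - Polygamma 1 (\<mu> + \<theta>)"
    "mellin_psi 2 ?f2 (- \<theta>) = Polygamma 2 (\<mu> + \<theta>) - Polygamma 2 \<theta>"
    using assms mellin_psi_exp_scaled[of \<beta> "\<mu> + \<theta>" 1] mellin_psi_exp_scaled[of \<beta> "\<mu> + \<theta>" 2]
    by (simp_all add: mellin_psi_beta_kernel_inverse add.commute)
  show ?thesis
    unfolding psi_cross_def psi using Polygamma_cross_pos[of \<theta> "\<mu> + \<theta>" 1] assms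
    by (simp add: algebra_simps numeral_eq_Suc)
qed

lemma psi_cross_beta_pos:
  assumes "\<beta> > 0" "\<mu> > 0" "\<theta> > 0"
  shows "psi_cross (\<lambda>x. if 0 < x \<and> x < 1 then (1 - x) powr (\<beta> - 1) else 0)
    (\<lambda>x. if x > 1 then (1 - 1 / x) powr (\<mu> - 1) else 0) (\<mu> + \<theta>) (- \<theta>) > 0"
proof -
  let ?f1 = "\<lambda>x. if 0 < x \<and> x < 1 then (1 - x) powr (\<beta> - 1) else 0"
    and ?f2 = "\<lambda>x. if x > 1 then (1 - 1 / x) powr (\<mu> - 1) else 0"
  have psi: "mellin_psi 1 ?f1 (\<mu> + \<theta>) = Polygamma 1 (\<mu> + \<theta>) - Polygamma 1 (\<mu> + \<theta> + \<beta>)"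
    "mellin_psi 2 ?f1 (\<mu> + \<theta>) = Polygamma 2 (\<mu> + \<theta>) - Polygamma 2 (\<mu> + \<theta> + \<beta>)"
    "mellin_psi 1 ?f2 (- \<theta>) = Polygamma 1 \<theta> - Polygamma 1 (\<mu> + \<theta>)"
    "mellin_psi 2 ?f2 (- \<theta>) = Polygamma 2 (\<mu> + \<theta>) - Polygamma 2 \<theta>"
    using assms by (simp_all add: mellin_psi_beta_kernel mellin_psi_beta_kernel_inverse add.commute)
  show ?thesis
    unfolding psi_cross_def psi using Polygamma_chord_cross_pos[of \<theta> "\<mu> + \<theta>" "\<mu> + \<theta> + \<beta>"] assms
    by (simp add: algebra_simps)
qed

lemma psi_cross_inverse_beta_pos:
  assumes "\<beta> > 0" "0 < \<theta>" "\<theta> < \<mu>"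
  shows "psi_cross (\<lambda>x. if x > 1 then (1 - 1 / x) powr (\<beta> - 1) else 0)
    (\<lambda>x. (x / (x + 1)) powr (\<beta> + \<mu>)) (\<theta> - \<mu>) (- \<theta>) > 0"
proof -
  let ?f1 = "\<lambda>x. if x > 1 then (1 - 1 / x) powr (\<beta> - 1) else 0"
    and ?f2 = "\<lambda>x. (x / (x + 1)) powr (\<beta> + \<mu>)"
  define u C where "u = \<mu> - \<theta>" and "C = \<beta> + \<mu> - \<theta>"
  have uC: "0 < u" "u < C"
    using assms by (simp_all add: u_def C_def)
  have psi: "mellin_psi 1 ?f1 (\<theta> - \<mu>) = Polygamma 1 u - Polygamma 1 C"
    "mellin_psi 2 ?f1 (\<theta> - \<mu>) = Polygamma 2 C - Polygamma 2 u"
    "mellin_psi 1 ?f2 (- \<theta>) = Polygamma 1 C + Polygamma 1 \<theta>"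
    "mellin_psi 2 ?f2 (- \<theta>) = Polygamma 2 C - Polygamma 2 \<theta>"
    using assms by (simp_all add: mellin_psi_beta_kernel_inverse mellin_psi_power_of_ratio u_def C_def
        algebra_simps)
  have "Polygamma 1 u * Polygamma 2 C - Polygamma 1 C * Polygamma 2 u > 0"
    using Polygamma_cross_pos[OF uC, of 1] by (simp add: numeral_eq_Suc)
  moreover have "Polygamma 2 \<theta> * (Polygamma 1 C - Polygamma 1 u) > 0"
    using Polygamma_real_even_neg[of \<theta> 2] Polygamma_real_strict_antimono[OF uC, of 1] assms
    by (simp add: mult_neg_neg)
  moreover have "Polygamma 1 \<theta> * (Polygamma 2 C - Polygamma 2 u) > 0"
    using assms uC by (auto intro!: mult_pos_pos Polygamma_real_odd_pos Polygamma_real_strict_mono)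
  ultimately show ?thesis
    unfolding psi_cross_def psi by (simp add: algebra_simps)
qed

theorem lemmaC2:
  fixes \<beta> \<mu> \<theta> :: real
  assumes "\<beta> > 0" and "\<mu> > 0"
  shows
    "(0 < \<theta> \<and> \<theta> < \<mu> \<longrightarrow>
        psi_cross (\<lambda>x. exp (- \<beta> / x)) (\<lambda>x. exp (- \<beta> / x)) (\<theta> - \<mu>) (- \<theta>) > 0)
   \<and> (0 < \<theta> \<longrightarrow>
        psi_cross (\<lambda>x. exp (- \<beta> * x))
                  (\<lambda>x. if x > 1 then (1 - 1 / x) powr (\<mu> - 1) else 0) (\<mu> + \<theta>) (- \<theta>) > 0)
   \<and> (0 < \<theta> \<longrightarrow>
        psi_cross (\<lambda>x. if 0 < x \<and> x < 1 then (1 - x) powr (\<beta> - 1) else 0)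
                  (\<lambda>x. if x > 1 then (1 - 1 / x) powr (\<mu> - 1) else 0) (\<mu> + \<theta>) (- \<theta>) > 0)
   \<and> (0 < \<theta> \<and> \<theta> < \<mu> \<longrightarrow>
        psi_cross (\<lambda>x. if x > 1 then (1 - 1 / x) powr (\<beta> - 1) else 0)
                  (\<lambda>x. (x / (x + 1)) powr (\<beta> + \<mu>)) (\<theta> - \<mu>) (- \<theta>) > 0)"
  using assms
  by (intro conjI impI psi_cross_inverse_gamma_pos psi_cross_gamma_pos psi_cross_beta_pos
      psi_cross_inverse_beta_pos) auto

end
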